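(* Let $\Gamma$ be a one-dimensional CW-complex and $n \geq 1$ an integer. Let $\Delta$ be the graph whose vertices are the edges of $\Gamma$ and whose edges link two disjoint edges of $\Gamma$, and fix an orientation of the edges of $\Gamma$ so that oriented edges of $\Gamma$ are identified with $E(\Gamma)\sqcup E(\Gamma)^{-1}$. If $\phi$ denotes the map sending the oriented hyperplane $[e,S]$ of $UC_n(\Gamma)$ to the oriented edge $e$, then $(\Delta, \phi)$ is a special coloring of $UC_n(\Gamma)$.
   Context: $UC_n(\Gamma)$ is the cube complex whose vertices are $n$-element subsets of $\Gamma^{(0)}$, whose edges join $S_1,S_2$ when $S_1\triangle S_2$ is a pair of adjacent vertices, and where $n$ edges at a common vertex span an $n$-cube when their labelling one-cells of $\Gamma$ are pairwise disjoint. An oriented edge of $UC_n(\Gamma)$ is a pair $(e,S)$ ($e$ an oriented edge of $\Gamma$, $o(e)\in S$, $t(e)\notin S$), going from $S$ to $(S\setminus\{o(e)\})\cup\{t(e)\}$; $[e,S]$ denotes the oriented hyperplane dual to it (oriented hyperplanes are classes of oriented edges under the relation generated by being parallel sides of a square). For a cube complex $X$, a special coloring $(\Delta,\phi)$ is a graph $\Delta$ and a map $\phi$ from oriented hyperplanes of $X$ to $V(\Delta)\sqcup V(\Delta)^{-1}$ such that: $\phi(J^{-1})=\phi(J)^{-1}$ for every oriented hyperplane $J$; two transverse oriented hyperplanes have adjacent colors; no two oriented hyperplanes adjacent to a given vertex have the same color; two oriented edges with the same origin whose dual oriented hyperplanes have adjacent colors span a square. (Adjacency of colors $a^{\pm1},b^{\pm1}$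 means $a,b$ adjacent in $\Delta$.) *)

theory Defs
  imports Main
begin

text \<open>
A one-dimensional CW-complex \<Gamma> is encoded as a (multi)graph with possible loops:
a vertex set V, a set of one-cells E, and endpoint maps src, tgt (which also fix an
orientation of every one-cell).  An oriented edge of \<Gamma> is a pair (e, b) with e in E;
b = True means e with its fixed orientation, b = False means e inverse.
\<close>

type_synonym 'e oedge = "'e \<times> bool"

definition org :: "('e \<Rightarrow> 'v) \<Rightarrow> ('e \<Rightarrow> 'v) \<Rightarrow> 'e oedge \<Rightarrow> 'v" where
  "org src tgt a = (if snd a then src (fst a) else tgt (fst a))"

definition ter :: "('e \<Rightarrow> 'v) \<Rightarrow> ('e \<Rightarrow> 'v) \<Rightarrow> 'e oedge \<Rightarrow> 'v" where
  "ter src tgt a = (if snd a then tgt (fst a) else src (fst a))"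

definition oinv :: "'e oedge \<Rightarrow> 'e oedge" where
  "oinv a = (fst a, \<not> snd a)"

definition cells_disjoint :: "('e \<Rightarrow> 'v) \<Rightarrow> ('e \<Rightarrow> 'v) \<Rightarrow> 'e \<Rightarrow> 'e \<Rightarrow> bool" where
  "cells_disjoint src tgt e f \<longleftrightarrow> {src e, tgt e} \<inter> {src f, tgt f} = {}"

definition uc_vertex :: "'v set \<Rightarrow> nat \<Rightarrow> 'v set \<Rightarrow> bool" where
  "uc_vertex V n S \<longleftrightarrow> S \<subseteq> V \<and> finite S \<and> card S = n"

definition uc_oedge :: "'v set \<Rightarrow> 'e set \<Rightarrow> ('e \<Rightarrow> 'v) \<Rightarrow> ('e \<Rightarrow> 'v) \<Rightarrow> nat
    \<Rightarrow> 'e oedge \<times> 'v set \<Rightarrow> bool" where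
  "uc_oedge V E src tgt n x \<longleftrightarrow> fst (fst x) \<in> E \<and> uc_vertex V n (snd x)
     \<and> org src tgt (fst x) \<in> snd x \<and> ter src tgt (fst x) \<notin> snd x"

definition uc_target :: "('e \<Rightarrow> 'v) \<Rightarrow> ('e \<Rightarrow> 'v) \<Rightarrow> 'e oedge \<times> 'v set \<Rightarrow> 'v set" where
  "uc_target src tgt x = insert (ter src tgt (fst x)) (snd x - {org src tgt (fst x)})"

definition uc_inv :: "('e \<Rightarrow> 'v) \<Rightarrow> ('e \<Rightarrow> 'v) \<Rightarrow> 'e oedge \<times> 'v set \<Rightarrow> 'e oedge \<times> 'v set" where
  "uc_inv src tgt x = (oinv (fst x), uc_target src tgt x)"

definition spans_square :: "'v set \<Rightarrow> 'e set \<Rightarrow> ('e \<Rightarrow> 'v) \<Rightarrow> ('e \<Rightarrow> 'v) \<Rightarrow> nat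
    \<Rightarrow> 'e oedge \<times> 'v set \<Rightarrow> 'e oedge \<times> 'v set \<Rightarrow> bool" where
  "spans_square V E src tgt n x y \<longleftrightarrow> uc_oedge V E src tgt n x \<and> uc_oedge V E src tgt n y
     \<and> snd x = snd y \<and> cells_disjoint src tgt (fst (fst x)) (fst (fst y))"

text \<open>x and y are parallel (same orientation) sides of a square: the square spanned at S
by (a,S) and (b,S) has (a,S) and (a, S.b) as parallel sides.\<close>
definition square_parallel :: "'v set \<Rightarrow> 'e set \<Rightarrow> ('e \<Rightarrow> 'v) \<Rightarrow> ('e \<Rightarrow> 'v) \<Rightarrow> nat
    \<Rightarrow> 'e oedge \<times> 'v set \<Rightarrow> 'e oedge \<times> 'v set \<Rightarrow> bool" where
  "square_parallel V E src tgt n x y \<longleftrightarrow>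
     (\<exists>z. spans_square V E src tgt n x z \<and> y = (fst x, uc_target src tgt z))"

definition hyp_rel :: "'v set \<Rightarrow> 'e set \<Rightarrow> ('e \<Rightarrow> 'v) \<Rightarrow> ('e \<Rightarrow> 'v) \<Rightarrow> nat
    \<Rightarrow> 'e oedge \<times> 'v set \<Rightarrow> 'e oedge \<times> 'v set \<Rightarrow> bool" where
  "hyp_rel V E src tgt n = (\<lambda>x y. square_parallel V E src tgt n x y
                                  \<or> square_parallel V E src tgt n y x)\<^sup>*\<^sup>*"

definition hyp_class :: "'v set \<Rightarrow> 'e set \<Rightarrow> ('e \<Rightarrow> 'v) \<Rightarrow> ('e \<Rightarrow> 'v) \<Rightarrow> nat
    \<Rightarrow> 'e oedge \<times> 'v set \<Rightarrow> ('e oedge \<times> 'v set) set" where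
  "hyp_class V E src tgt n x = {y. hyp_rel V E src tgt n x y}"

definition oriented_hyperplanes :: "'v set \<Rightarrow> 'e set \<Rightarrow> ('e \<Rightarrow> 'v) \<Rightarrow> ('e \<Rightarrow> 'v) \<Rightarrow> nat
    \<Rightarrow> ('e oedge \<times> 'v set) set set" where
  "oriented_hyperplanes V E src tgt n =
     {hyp_class V E src tgt n x | x. uc_oedge V E src tgt n x}"

definition hyp_inv :: "('e \<Rightarrow> 'v) \<Rightarrow> ('e \<Rightarrow> 'v) \<Rightarrow> ('e oedge \<times> 'v set) set
    \<Rightarrow> ('e oedge \<times> 'v set) set" where
  "hyp_inv src tgt J = uc_inv src tgt ` J"

definition transverse :: "'v set \<Rightarrow> 'e set \<Rightarrow> ('e \<Rightarrow> 'v) \<Rightarrow> ('e \<Rightarrow> 'v) \<Rightarrow> nat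
    \<Rightarrow> ('e oedge \<times> 'v set) set \<Rightarrow> ('e oedge \<times> 'v set) set \<Rightarrow> bool" where
  "transverse V E src tgt n J K \<longleftrightarrow>
     (\<exists>x y. (x \<in> J \<or> x \<in> hyp_inv src tgt J) \<and> (y \<in> K \<or> y \<in> hyp_inv src tgt K)
            \<and> spans_square V E src tgt n x y)"

text \<open>Special coloring (\<Delta>, \<phi>) of UC_n(\<Gamma>); \<Delta> has vertex set DV and adjacency Dadj;
colours are V(\<Delta>) \<sqcup> V(\<Delta>)^{-1}, encoded as 'c \<times> bool (False = inverse).\<close>
definition special_coloring :: "'v set \<Rightarrow> 'e set \<Rightarrow> ('e \<Rightarrow> 'v) \<Rightarrow> ('e \<Rightarrow> 'v) \<Rightarrow> nat
    \<Rightarrow> 'c set \<Rightarrow> ('c \<Rightarrow> 'c \<Rightarrow> bool) \<Rightarrow> (('e oedge \<times> 'v set) set \<Rightarrow> 'c \<times> bool) \<Rightarrow> bool" where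
  "special_coloring V E src tgt n DV Dadj phi \<longleftrightarrow>
     (\<forall>J \<in> oriented_hyperplanes V E src tgt n. fst (phi J) \<in> DV)
   \<and> (\<forall>J \<in> oriented_hyperplanes V E src tgt n.
        phi (hyp_inv src tgt J) = (fst (phi J), \<not> snd (phi J)))
   \<and> (\<forall>J \<in> oriented_hyperplanes V E src tgt n. \<forall>K \<in> oriented_hyperplanes V E src tgt n.
        transverse V E src tgt n J K \<longrightarrow> Dadj (fst (phi J)) (fst (phi K)))
   \<and> (\<forall>x y. uc_oedge V E src tgt n x \<and> uc_oedge V E src tgt n y \<and> snd x = snd y
        \<and> hyp_class V E src tgt n x \<noteq> hyp_class V E src tgt n y
        \<longrightarrow> phi (hyp_class V E src tgt n x) \<noteq> phi (hyp_class V E src tgt n y))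
   \<and> (\<forall>x y. uc_oedge V E src tgt n x \<and> uc_oedge V E src tgt n y \<and> snd x = snd y
        \<and> Dadj (fst (phi (hyp_class V E src tgt n x))) (fst (phi (hyp_class V E src tgt n y)))
        \<longrightarrow> spans_square V E src tgt n x y)"

definition delta_adj :: "'e set \<Rightarrow> ('e \<Rightarrow> 'v) \<Rightarrow> ('e \<Rightarrow> 'v) \<Rightarrow> 'e \<Rightarrow> 'e \<Rightarrow> bool" where
  "delta_adj E src tgt e f \<longleftrightarrow> e \<in> E \<and> f \<in> E \<and> cells_disjoint src tgt e f"

end

theory Submission
  imports Defs
begin

text \<open>
  The color \<phi> J is the common label of the oriented edges dual to J (well defined, since
  parallel sides of a square carry the same label). The inverse of a square is a square, so
  J\<inverse> consists of the inverses of the edges dual to J and gets the inverse label. Two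
  oriented edges at a common vertex S span a square exactly when their labels are disjoint cells,
  i.e. adjacent in \<Delta>; this gives both the transversality and the square condition. Finally,
  an oriented edge at S is determined by its label, so distinct hyperplanes adjacent to S have
  distinct colors.
\<close>

lemma org_ter_endpoints: "{org src tgt a, ter src tgt a} = {src (fst a), tgt (fst a)}"
  by (auto simp: org_def ter_def)

lemma org_oinv [simp]: "org src tgt (oinv a) = ter src tgt a"
  and ter_oinv [simp]: "ter src tgt (oinv a) = org src tgt a"
  and fst_oinv [simp]: "fst (oinv a) = fst a"
  by (simp_all add: org_def ter_def oinv_def)

lemma uc_vertex_move:
  assumes "uc_vertex V n S" and "u \<in> S" and "v \<in> V" and "v \<notin> S"
  shows "uc_vertex V n (insert v (S - {u}))"
proof -
  have "finite S" and "card S = n" using assms(1) by (auto simp: uc_vertex_def)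
  then have "n \<ge> 1" using \<open>u \<in> S\<close> by (metis One_nat_def Suc_leI card_gt_0_iff empty_iff)
  with assms show ?thesis
    by (auto simp: uc_vertex_def card_Diff_singleton)
qed

lemma uc_inv_uc_inv: "uc_oedge V E src tgt n x \<Longrightarrow> uc_inv src tgt (uc_inv src tgt x) = x"
  by (cases x) (auto simp: uc_oedge_def uc_inv_def uc_target_def oinv_def org_def ter_def)

lemma mem_hyp_class_self: "x \<in> hyp_class V E src tgt n x"
  by (simp add: hyp_class_def hyp_rel_def)

lemma hyp_class_mem_oriented_hyperplanes:
  "uc_oedge V E src tgt n x \<Longrightarrow> hyp_class V E src tgt n x \<in> oriented_hyperplanes V E src tgt n"
  unfolding oriented_hyperplanes_def by blast

lemma oriented_hyperplanesE:
  assumes "J \<in> oriented_hyperplanes V E src tgt n"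
  obtains x where "uc_oedge V E src tgt n x" and "J = hyp_class V E src tgt n x"
  using assms unfolding oriented_hyperplanes_def by blast

lemma spans_square_sym:
  "spans_square V E src tgt n x z \<Longrightarrow> spans_square V E src tgt n z x"
  by (auto simp: spans_square_def cells_disjoint_def)

lemma spans_square_endpoints_disjoint:
  assumes "spans_square V E src tgt n x z"
  shows "{org src tgt (fst x), ter src tgt (fst x)} \<inter> {org src tgt (fst z), ter src tgt (fst z)} = {}"
  using assms by (simp add: spans_square_def cells_disjoint_def org_ter_endpoints)

context
  fixes V :: "'v set" and E :: "'e set" and src tgt :: "'e \<Rightarrow> 'v" and n :: nat
  assumes endpoints: "\<forall>e \<in> E. src e \<in> V \<and> tgt e \<in> V"
begin

lemma ter_in_vertices: "fst a \<in> E \<Longrightarrow> ter src tgt a \<in> V"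
  using endpoints by (auto simp: ter_def)

lemma uc_oedge_uc_inv:
  assumes "uc_oedge V E src tgt n x"
  shows "uc_oedge V E src tgt n (uc_inv src tgt x)"
  using assms uc_vertex_move[of V n "snd x" "org src tgt (fst x)" "ter src tgt (fst x)"]
  by (auto simp: uc_oedge_def uc_inv_def uc_target_def ter_in_vertices)

lemma uc_oedge_slide:
  assumes "spans_square V E src tgt n x z"
  shows "uc_oedge V E src tgt n (fst x, uc_target src tgt z)"
proof -
  have x: "uc_oedge V E src tgt n x" and z: "uc_oedge V E src tgt n z" and "snd x = snd z"
    using assms by (auto simp: spans_square_def)
  have "org src tgt (fst x) \<noteq> org src tgt (fst z)" and "ter src tgt (fst x) \<noteq> ter src tgt (fst z)"
    using spans_square_endpoints_disjoint[OF assms] by blast+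
  moreover have "uc_vertex V n (uc_target src tgt z)"
    using uc_oedge_uc_inv[OF z] by (simp add: uc_oedge_def uc_inv_def)
  ultimately show ?thesis
    using x \<open>snd x = snd z\<close> by (simp add: uc_oedge_def uc_target_def)
qed

lemma square_parallel_uc_oedge:
  assumes "square_parallel V E src tgt n x y"
  shows "uc_oedge V E src tgt n x" and "uc_oedge V E src tgt n y"
proof -
  obtain z where "spans_square V E src tgt n x z" and "y = (fst x, uc_target src tgt z)"
    using assms by (auto simp: square_parallel_def)
  then show "uc_oedge V E src tgt n x" and "uc_oedge V E src tgt n y"
    using uc_oedge_slide by (auto simp: spans_square_def)
qed

lemma hyp_rel_uc_oedge:
  "hyp_rel V E src tgt n x y \<Longrightarrow> uc_oedge V E src tgt n x \<Longrightarrow> uc_oedge V E src tgt n y"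
  unfolding hyp_rel_def
  by (induction rule: rtranclp_induct) (auto dest: square_parallel_uc_oedge)

text \<open>
  For x = (a,S) and z = (b,S), the same square is spanned at S.a by the inverse of x and
  z' = (b, S.a), and the inverse of the side opposite to x is the side opposite to the inverse
  of x.
\<close>

lemma square_parallel_uc_inv:
  assumes "square_parallel V E src tgt n x y"
  shows "square_parallel V E src tgt n (uc_inv src tgt x) (uc_inv src tgt y)"
proof -
  obtain z where square: "spans_square V E src tgt n x z"
    and y: "y = (fst x, uc_target src tgt z)"
    using assms by (auto simp: square_parallel_def)
  have x: "uc_oedge V E src tgt n x" and same_origin: "snd x = snd z"
    using square by (auto simp: spans_square_def)
  note disjoint = spans_square_endpoints_disjoint[OF square]
  define z' where "z' = (fst z, uc_target src tgt x)"
  have "uc_oedge V E src tgt n z'"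
    unfolding z'_def using spans_square_sym[OF square] by (rule uc_oedge_slide)
  with uc_oedge_uc_inv[OF x] square
  have "spans_square V E src tgt n (uc_inv src tgt x) z'"
    by (auto simp: spans_square_def uc_inv_def z'_def)
  moreover have "uc_target src tgt y = uc_target src tgt z'"
    using disjoint by (auto simp: y z'_def uc_target_def same_origin)
  then have "uc_inv src tgt y = (fst (uc_inv src tgt x), uc_target src tgt z')"
    by (simp add: uc_inv_def y)
  ultimately show ?thesis
    unfolding square_parallel_def by blast
qed

lemma hyp_rel_uc_inv:
  "hyp_rel V E src tgt n x y \<Longrightarrow> hyp_rel V E src tgt n (uc_inv src tgt x) (uc_inv src tgt y)"
  unfolding hyp_rel_def
proof (induction rule: rtranclp_induct)
  case (step y w)
  then show ?case
    by (auto intro: rtranclp.rtrancl_into_rtrancl dest: square_parallel_uc_inv)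
qed simp

lemma hyp_inv_hyp_class:
  assumes x: "uc_oedge V E src tgt n x"
  shows "hyp_inv src tgt (hyp_class V E src tgt n x) = hyp_class V E src tgt n (uc_inv src tgt x)"
proof (intro equalityI subsetI)
  fix w
  assume "w \<in> hyp_inv src tgt (hyp_class V E src tgt n x)"
  then show "w \<in> hyp_class V E src tgt n (uc_inv src tgt x)"
    by (auto simp: hyp_inv_def hyp_class_def hyp_rel_uc_inv)
next
  fix w
  assume "w \<in> hyp_class V E src tgt n (uc_inv src tgt x)"
  then have rel: "hyp_rel V E src tgt n (uc_inv src tgt x) w"
    by (simp add: hyp_class_def)
  then have "uc_oedge V E src tgt n w"
    using hyp_rel_uc_oedge uc_oedge_uc_inv[OF x] by blast
  then have "w = uc_inv src tgt (uc_inv src tgt w)"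
    by (simp add: uc_inv_uc_inv)
  moreover have "hyp_rel V E src tgt n x (uc_inv src tgt w)"
    using hyp_rel_uc_inv[OF rel] by (simp add: uc_inv_uc_inv[OF x])
  ultimately show "w \<in> hyp_inv src tgt (hyp_class V E src tgt n x)"
    by (auto simp: hyp_inv_def hyp_class_def)
qed

lemma hyp_inv_mem_oriented_hyperplanes:
  assumes "J \<in> oriented_hyperplanes V E src tgt n"
  shows "hyp_inv src tgt J \<in> oriented_hyperplanes V E src tgt n"
proof -
  obtain x where "uc_oedge V E src tgt n x" and "J = hyp_class V E src tgt n x"
    using assms by (rule oriented_hyperplanesE)
  then show ?thesis
    by (simp add: hyp_inv_hyp_class uc_oedge_uc_inv hyp_class_mem_oriented_hyperplanes)
qed

context
  fixes phi :: "('e oedge \<times> 'v set) set \<Rightarrow> 'e oedge"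
  assumes phi: "\<forall>J \<in> oriented_hyperplanes V E src tgt n. \<forall>x \<in> J. phi J = fst x"
begin

lemma phi_hyp_class:
  assumes "uc_oedge V E src tgt n x"
  shows "phi (hyp_class V E src tgt n x) = fst x"
  using bspec[OF bspec[OF phi hyp_class_mem_oriented_hyperplanes[OF assms]] mem_hyp_class_self] .

lemma phi_mem_edges:
  assumes "J \<in> oriented_hyperplanes V E src tgt n"
  shows "fst (phi J) \<in> E"
proof -
  obtain x where "uc_oedge V E src tgt n x" and "J = hyp_class V E src tgt n x"
    using assms by (rule oriented_hyperplanesE)
  then show ?thesis
    by (simp add: phi_hyp_class uc_oedge_def)
qed

lemma phi_hyp_inv:
  assumes "J \<in> oriented_hyperplanes V E src tgt n"
  shows "phi (hyp_inv src tgt J) = oinv (phi J)"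
proof -
  obtain x where "uc_oedge V E src tgt n x" and "J = hyp_class V E src tgt n x"
    using assms by (rule oriented_hyperplanesE)
  then have "phi (hyp_inv src tgt J) = fst (uc_inv src tgt x)"
    by (simp add: hyp_inv_hyp_class phi_hyp_class uc_oedge_uc_inv)
  with \<open>uc_oedge V E src tgt n x\<close> \<open>J = hyp_class V E src tgt n x\<close> show ?thesis
    by (simp add: phi_hyp_class uc_inv_def)
qed

lemma phi_dual_cell:
  assumes J: "J \<in> oriented_hyperplanes V E src tgt n"
    and w: "w \<in> J \<or> w \<in> hyp_inv src tgt J"
  shows "fst (fst w) = fst (phi J)"
  using w
proof
  assume "w \<in> J"
  then show ?thesis
    using phi J by simp
next
  assume "w \<in> hyp_inv src tgt J"
  then have "phi (hyp_inv src tgt J) = fst w"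
    using phi hyp_inv_mem_oriented_hyperplanes[OF J] by blast
  then show ?thesis
    using phi_hyp_inv[OF J] by (metis fst_oinv)
qed

lemma transverse_phi_adjacent:
  assumes J: "J \<in> oriented_hyperplanes V E src tgt n"
    and K: "K \<in> oriented_hyperplanes V E src tgt n"
    and "transverse V E src tgt n J K"
  shows "delta_adj E src tgt (fst (phi J)) (fst (phi K))"
proof -
  obtain x y where x: "x \<in> J \<or> x \<in> hyp_inv src tgt J" and y: "y \<in> K \<or> y \<in> hyp_inv src tgt K"
    and square: "spans_square V E src tgt n x y"
    using assms(3) unfolding transverse_def by blast
  have "fst (fst x) = fst (phi J)" and "fst (fst y) = fst (phi K)"
    using phi_dual_cell[OF J x] phi_dual_cell[OF K y] .
  with square show ?thesis
    by (auto simp: delta_adj_def spans_square_def uc_oedge_def)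
qed

lemma phi_hyp_class_distinct:
  assumes "uc_oedge V E src tgt n x" and "uc_oedge V E src tgt n y" and "snd x = snd y"
    and "hyp_class V E src tgt n x \<noteq> hyp_class V E src tgt n y"
  shows "phi (hyp_class V E src tgt n x) \<noteq> phi (hyp_class V E src tgt n y)"
proof
  assume "phi (hyp_class V E src tgt n x) = phi (hyp_class V E src tgt n y)"
  then have "fst x = fst y"
    using assms(1,2) by (simp add: phi_hyp_class)
  with assms(3) have "x = y"
    by (simp add: prod_eq_iff)
  with assms(4) show False
    by simp
qed

lemma phi_adjacent_spans_square:
  assumes "uc_oedge V E src tgt n x" and "uc_oedge V E src tgt n y" and "snd x = snd y"
    and "delta_adj E src tgt (fst (phi (hyp_class V E src tgt n x)))
                             (fst (phi (hyp_class V E src tgt n y)))"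
  shows "spans_square V E src tgt n x y"
  using assms by (simp add: phi_hyp_class delta_adj_def spans_square_def)

end

end

theorem proposition3p7:
  fixes V :: "'v set" and E :: "'e set" and src tgt :: "'e \<Rightarrow> 'v" and n :: nat
    and phi :: "('e oedge \<times> 'v set) set \<Rightarrow> 'e oedge"
  assumes cw: "\<forall>e \<in> E. src e \<in> V \<and> tgt e \<in> V"
    and n: "n \<ge> 1"
    and phi: "\<forall>J \<in> oriented_hyperplanes V E src tgt n. \<forall>x \<in> J. phi J = fst x"
  shows "special_coloring V E src tgt n E (delta_adj E src tgt) phi"
proof -
  have "phi (hyp_inv src tgt J) = (fst (phi J), \<not> snd (phi J))"
    if "J \<in> oriented_hyperplanes V E src tgt n" for J
    using phi_hyp_inv[OF cw phi that] by (simp add: oinv_def)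
  then show ?thesis
    unfolding special_coloring_def
    using phi_mem_edges[OF cw phi] transverse_phi_adjacent[OF cw phi]
      phi_hyp_class_distinct[OF cw phi] phi_adjacent_spans_square[OF cw phi]
    by blast
qed

end
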